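(* Let $\lambda\in(0,1)$ be fixed and let $\omega\sim\mathcal G(n,p)$ with $p=\lambda/n$. There exists $c=c(\lambda)>0$ such that for every $\rho>0$ there exists $M_0=M_0(\lambda,\rho)$ such that for every $M\geq M_0$ there is $C=C(\lambda,\rho,M)$ with \[\mathbb P\big(|S_M(\omega)|\geq \rho n\big)\leq C e^{-c\rho n}\quad\text{for all } n.\]
   Context: $\mathcal G(n,p)$ is the Erdős–Rényi random graph on vertex set $\{1,\dots,n\}$. For a graph $\omega$ and vertex $x$, $\mathcal C_x$ denotes the connected component (cluster) of $x$, and $S_M(\omega)=\{x:|\mathcal C_x|>M\}$ is the set of vertices in clusters of size larger than $M$. *)

theory Defs
  imports "HOL-Probability.Probability"
begin

definition all_edges :: "nat \<Rightarrow> nat set set" where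
  "all_edges n = {e. \<exists>i j. i \<in> {1..n} \<and> j \<in> {1..n} \<and> i \<noteq> j \<and> e = {i, j}}"

definition gnp :: "nat \<Rightarrow> real \<Rightarrow> nat set set pmf" where
  "gnp n p = map_pmf (\<lambda>f. {e \<in> all_edges n. f e})
                     (Pi_pmf (all_edges n) False (\<lambda>_. bernoulli_pmf p))"

definition cluster :: "nat \<Rightarrow> nat set set \<Rightarrow> nat \<Rightarrow> nat set" where
  "cluster n E x = {y \<in> {1..n}. (x, y) \<in> {(a, b). {a, b} \<in> E}\<^sup>*}"

definition S_big :: "nat \<Rightarrow> nat \<Rightarrow> nat set set \<Rightarrow> nat set" where
  "S_big n M E = {x \<in> {1..n}. card (cluster n E x) > M}"

end

theory Submission
  imports Defs
begin

text \<open>Explore the graph one vertex at a time: the current vertex is removed and its unexplored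
  neighbours become active. Given the past, the number X_i of newly activated vertices is
  dominated by a Binomial(n, lam/n) variable. The clusters are the excursions of the exploration
  between steps with no active vertex, and along an excursion of length k the increments sum to
  k - 1. If at least rho n vertices lie in clusters of size > M, the set S of steps lying in
  such excursions therefore has at least rho n elements, at most 2|S|/(M+1) boundary points, and
  increments summing to at least M|S|/(M+1), which exceeds lam |S| for large M. A Chernoff bound
  makes each such S exponentially unlikely, and since S is determined by its boundary there are
  few candidates, so a union bound concludes.\<close>

section \<open>Product Bernoulli measure on subsets of a finite set\<close>

text \<open>bexpect p D h is the expectation of h when each element of D is chosen independently with
  probability p; these explicit finite sums replace independence arguments for Pi_pmf.\<close>

definition bweight :: "real \<Rightarrow> 'a set \<Rightarrow> 'a set \<Rightarrow> real" where
  "bweight p D E = p ^ card E * (1 - p) ^ card (D - E)"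

definition bexpect :: "real \<Rightarrow> 'a set \<Rightarrow> ('a set \<Rightarrow> real) \<Rightarrow> real" where
  "bexpect p D h = (\<Sum>E\<in>Pow D. bweight p D E * h E)"

lemma bweight_nonneg: "0 \<le> p \<Longrightarrow> p \<le> 1 \<Longrightarrow> 0 \<le> bweight p D E"
  by (simp add: bweight_def)

lemma bweight_eq_prod:
  assumes "finite D" "E \<subseteq> D"
  shows "bweight p D E = (\<Prod>e\<in>D. if e \<in> E then p else 1 - p)"
proof -
  have "(\<Prod>e\<in>D. if e \<in> E then p else 1 - p) = (\<Prod>e\<in>D \<inter> E. p) * (\<Prod>e\<in>D - E. 1 - p)"
    using assms by (simp add: prod.If_cases Diff_eq)
  also have "D \<inter> E = E" using assms by auto
  finally show ?thesis by (simp add: bweight_def)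
qed

lemma sum_bweight_power_card:
  assumes "finite D"
  shows "(\<Sum>E\<in>Pow D. bweight p D E * z ^ card E) = (1 - p + p * z) ^ card D"
proof -
  have "(1 - p + p * z) ^ card D = (\<Prod>x\<in>D. p * z + (1 - p))" by (simp add: add.commute)
  also have "\<dots> = (\<Sum>X\<in>Pow D. (\<Prod>x\<in>X. p * z) * (\<Prod>x\<in>D - X. 1 - p))"
    by (rule prod_add[OF assms])
  also have "\<dots> = (\<Sum>E\<in>Pow D. bweight p D E * z ^ card E)"
    by (intro sum.cong) (auto simp: bweight_def power_mult_distrib)
  finally show ?thesis by simp
qed

lemma bexpect_const: "finite D \<Longrightarrow> bexpect p D (\<lambda>_. c) = c"
  using sum_bweight_power_card[of D p 1] by (simp add: bexpect_def sum_distrib_right[symmetric])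

lemma bexpect_cong: "(\<And>E. E \<subseteq> D \<Longrightarrow> h E = h' E) \<Longrightarrow> bexpect p D h = bexpect p D h'"
  unfolding bexpect_def by (intro sum.cong) auto

lemma bexpect_mono:
  assumes "0 \<le> p" "p \<le> 1" "\<And>E. E \<subseteq> D \<Longrightarrow> h E \<le> h' E"
  shows "bexpect p D h \<le> bexpect p D h'"
  unfolding bexpect_def using assms bweight_nonneg[OF assms(1,2)]
  by (intro sum_mono mult_left_mono) auto

lemma bexpect_nonneg:
  "0 \<le> p \<Longrightarrow> p \<le> 1 \<Longrightarrow> (\<And>E. E \<subseteq> D \<Longrightarrow> 0 \<le> h E) \<Longrightarrow> 0 \<le> bexpect p D h"
  unfolding bexpect_def by (intro sum_nonneg mult_nonneg_nonneg bweight_nonneg) auto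

lemma bexpect_cmult: "bexpect p D (\<lambda>E. c * h E) = c * bexpect p D h"
  by (simp add: bexpect_def sum_distrib_left mult_ac)

lemma bexpect_sum: "bexpect p D (\<lambda>E. \<Sum>S\<in>I. h S E) = (\<Sum>S\<in>I. bexpect p D (h S))"
  by (simp add: bexpect_def sum_distrib_left sum.swap[of _ "Pow D"])

lemma sum_Pow_Un:
  assumes "D1 \<inter> D2 = {}"
  shows "(\<Sum>E\<in>Pow (D1 \<union> D2). f E) = (\<Sum>E1\<in>Pow D1. \<Sum>E2\<in>Pow D2. f (E1 \<union> E2))"
proof -
  have "bij_betw (\<lambda>(E1, E2). E1 \<union> E2) (Pow D1 \<times> Pow D2) (Pow (D1 \<union> D2))"
    by (rule bij_betwI[where g = "\<lambda>E. (E \<inter> D1, E \<inter> D2)"]) (use assms in auto)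
  then have "(\<Sum>E\<in>Pow (D1 \<union> D2). f E) = (\<Sum>(E1, E2)\<in>Pow D1 \<times> Pow D2. f (E1 \<union> E2))"
    by (simp add: sum.reindex_bij_betw[symmetric] case_prod_unfold)
  then show ?thesis by (simp add: sum.cartesian_product)
qed

lemma bweight_Un:
  assumes "finite D1" "finite D2" "D1 \<inter> D2 = {}" "E1 \<subseteq> D1" "E2 \<subseteq> D2"
  shows "bweight p (D1 \<union> D2) (E1 \<union> E2) = bweight p D1 E1 * bweight p D2 E2"
proof -
  have "finite E1" "finite E2" using assms(1,2,4,5) finite_subset by blast+
  then have c1: "card (E1 \<union> E2) = card E1 + card E2"
    using assms by (intro card_Un_disjoint) auto
  have e: "(D1 \<union> D2) - (E1 \<union> E2) = (D1 - E1) \<union> (D2 - E2)" using assms by auto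
  have c2: "card ((D1 - E1) \<union> (D2 - E2)) = card (D1 - E1) + card (D2 - E2)"
    using assms by (intro card_Un_disjoint) auto
  show ?thesis unfolding bweight_def c1 e c2 by (simp add: power_add)
qed

lemma bexpect_Un:
  assumes "finite D1" "finite D2" "D1 \<inter> D2 = {}"
  shows "bexpect p (D1 \<union> D2) h =
           (\<Sum>E1\<in>Pow D1. bweight p D1 E1 * bexpect p D2 (\<lambda>E2. h (E1 \<union> E2)))"
  unfolding bexpect_def sum_Pow_Un[OF assms(3)]
  by (auto intro!: sum.cong simp: bweight_Un[OF assms] sum_distrib_left mult.assoc)

lemma finite_all_edges: "finite (all_edges n)"
  unfolding all_edges_def by (rule finite_subset[of _ "Pow {1..n}"]) auto

lemma prob_gnp_eq_bexpect:
  assumes p: "0 < p" "p < 1"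
  shows "measure_pmf.prob (gnp n p) A = bexpect p (all_edges n) (\<lambda>E. if E \<in> A then 1 else 0)"
proof -
  define D where "D = all_edges n"
  define M where "M = Pi_pmf D False (\<lambda>_. bernoulli_pmf p)"
  define F where "F = (\<lambda>f. {e \<in> D. f e})"
  have fD: "finite D" unfolding D_def by (rule finite_all_edges)
  have gnp: "gnp n p = map_pmf F M" unfolding gnp_def M_def F_def D_def by simp
  have "set_pmf M \<subseteq> {f. \<forall>x. x \<notin> D \<longrightarrow> f x = False}"
    unfolding M_def by (rule set_Pi_pmf_subset[OF fD])
  then have inj: "inj_on F (set_pmf M)"
    unfolding F_def by (intro inj_onI) (auto simp: fun_eq_iff set_eq_iff)
  have pmf_M: "pmf M (\<lambda>e. e \<in> E) = bweight p D E" if "E \<subseteq> D" for E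
    using that p fD by (simp add: M_def pmf_Pi bweight_eq_prod if_distrib cong: if_cong)
      (auto intro!: prod.cong)
  have pmf_gnp: "pmf (gnp n p) E = bweight p D E" if E: "E \<subseteq> D" for E
  proof -
    have "0 < bweight p D E" using p by (simp add: bweight_def)
    then have "(\<lambda>e. e \<in> E) \<in> set_pmf M" using pmf_M[OF E] by (simp add: set_pmf_eq')
    moreover have "F (\<lambda>e. e \<in> E) = E" using E unfolding F_def by auto
    ultimately show ?thesis using pmf_map_inj[OF inj] pmf_M[OF E] gnp by metis
  qed
  have "set_pmf (gnp n p) \<subseteq> Pow D" unfolding gnp F_def by auto
  then have "A \<inter> set_pmf (gnp n p) = (Pow D \<inter> A) \<inter> set_pmf (gnp n p)" by blast
  then have "measure_pmf.prob (gnp n p) A = measure_pmf.prob (gnp n p) (Pow D \<inter> A)"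
    by (metis measure_Int_set_pmf)
  also have "\<dots> = (\<Sum>E\<in>Pow D \<inter> A. pmf (gnp n p) E)"
    using fD by (intro measure_measure_pmf_finite) auto
  also have "\<dots> = (\<Sum>E\<in>Pow D. bweight p D E * (if E \<in> A then 1 else 0))"
    using fD by (simp add: pmf_gnp sum.inter_restrict) (auto intro: sum.cong)
  finally show ?thesis unfolding bexpect_def D_def .
qed

section \<open>Exploration of a graph\<close>

definition pairs :: "'a set \<Rightarrow> 'a set set" where
  "pairs W = {e. \<exists>a b. a \<in> W \<and> b \<in> W \<and> a \<noteq> b \<and> e = {a, b}}"

lemma all_edges_eq_pairs: "all_edges n = pairs {1..n}"
  unfolding all_edges_def pairs_def by auto

lemma finite_pairs: "finite W \<Longrightarrow> finite (pairs W)"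
  unfolding pairs_def by (rule finite_subset[of _ "Pow W"]) auto

lemma pairs_insert:
  "w \<notin> W \<Longrightarrow> pairs (insert w W) = (\<lambda>u. {w, u}) ` W \<union> pairs W"
  unfolding pairs_def by (auto simp: insert_commute)

lemma star_Int_pairs: "w \<notin> W \<Longrightarrow> (\<lambda>u. {w, u}) ` W \<inter> pairs W = {}"
  unfolding pairs_def by (auto simp: doubleton_eq_iff)

text \<open>A state is a pair (active vertices, unexplored vertices). Each step removes the current
  vertex (the least active one, or the least unexplored one if none is active) and activates its
  unexplored neighbours; their number is the increment of the exploration walk.\<close>

type_synonym state = "nat set \<times> nat set"

definition current :: "state \<Rightarrow> nat" where
  "current s = (if fst s = {} then Min (snd s) else Min (fst s))"

definition candidates :: "state \<Rightarrow> nat set" where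
  "candidates s = snd s - {current s}"

definition revealed :: "nat set set \<Rightarrow> state \<Rightarrow> nat set" where
  "revealed E s = {u \<in> candidates s. {current s, u} \<in> E}"

definition explore_step :: "nat set set \<Rightarrow> state \<Rightarrow> state" where
  "explore_step E s = ((fst s \<union> revealed E s) - {current s}, candidates s - revealed E s)"

primrec explore :: "nat set set \<Rightarrow> state \<Rightarrow> nat \<Rightarrow> state" where
  "explore E s 0 = s"
| "explore E s (Suc i) = explore_step E (explore E s i)"

definition revealed_count :: "nat set set \<Rightarrow> state \<Rightarrow> nat \<Rightarrow> nat" where
  "revealed_count E s i = card (revealed E (explore E s i))"

definition remaining :: "state \<Rightarrow> nat set" where
  "remaining s = fst s \<union> snd s"

definition wf_state :: "state \<Rightarrow> bool" where
  "wf_state s \<longleftrightarrow> finite (fst s) \<and> finite (snd s) \<and> fst s \<inter> snd s = {}"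

lemma revealed_subset: "revealed E s \<subseteq> candidates s"
  unfolding revealed_def by auto

lemma remaining_explore_step: "remaining (explore_step E s) = remaining s - {current s}"
  using revealed_subset[of E s] unfolding remaining_def explore_step_def candidates_def by auto

lemma wf_state_explore_step: "wf_state s \<Longrightarrow> wf_state (explore_step E s)"
  using revealed_subset[of E s] unfolding wf_state_def explore_step_def candidates_def
  by (auto intro: finite_subset)

lemma wf_state_explore: "wf_state s \<Longrightarrow> wf_state (explore E s i)"
  by (induction i) (auto intro: wf_state_explore_step)

lemma finite_remaining: "wf_state s \<Longrightarrow> finite (remaining s)"
  unfolding wf_state_def remaining_def by auto

lemma current_in_remaining: "wf_state s \<Longrightarrow> remaining s \<noteq> {} \<Longrightarrow> current s \<in> remaining s"
  unfolding wf_state_def remaining_def current_def by (auto intro: Min_in)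

lemma remaining_explore_subset: "remaining (explore E s i) \<subseteq> remaining s"
  by (induction i) (auto simp: remaining_explore_step)

lemma explore_Suc_right: "explore E s (Suc i) = explore E (explore_step E s) i"
  by (induction i) auto

lemma card_remaining_explore:
  "wf_state s \<Longrightarrow> card (remaining (explore E s i)) = card (remaining s) - i"
proof (induction i)
  case (Suc i)
  have wf: "wf_state (explore E s i)" by (rule wf_state_explore[OF Suc.prems])
  show ?case
  proof (cases "remaining (explore E s i) = {}")
    case True
    then show ?thesis using Suc by (simp add: remaining_explore_step)
  next
    case False
    then show ?thesis using Suc current_in_remaining[OF wf False] finite_remaining[OF wf]
      by (simp add: remaining_explore_step)
  qed
qed simp

lemma revealed_local:
  assumes "wf_state t" "remaining t \<subseteq> V"
  shows "revealed E t = revealed (E \<inter> pairs V) t"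
proof (cases "snd t = {}")
  case True
  then show ?thesis by (simp add: revealed_def candidates_def)
next
  case False
  then have "current t \<in> V"
    using current_in_remaining[OF assms(1)] assms(2) by (auto simp: remaining_def)
  then have "{current t, u} \<in> pairs V" if "u \<in> candidates t" for u
    using that assms(2) unfolding pairs_def candidates_def remaining_def by blast
  then show ?thesis unfolding revealed_def by blast
qed

lemma explore_local:
  assumes "wf_state s" "remaining s \<subseteq> V"
  shows "explore E s i = explore (E \<inter> pairs V) s i"
proof (induction i)
  case (Suc i)
  have "revealed E (explore E s i) = revealed (E \<inter> pairs V) (explore E s i)"
    using wf_state_explore[OF assms(1)] remaining_explore_subset assms(2)
    by (intro revealed_local) blast+
  then show ?case using Suc by (simp add: explore_step_def)
qed simp

lemma revealed_count_local:
  assumes "wf_state s" "remaining s \<subseteq> V"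
  shows "revealed_count E s i = revealed_count (E \<inter> pairs V) s i"
proof -
  have "revealed E (explore E s i) = revealed (E \<inter> pairs V) (explore E s i)"
    using wf_state_explore[OF assms(1)] remaining_explore_subset assms(2)
    by (intro revealed_local) blast+
  then show ?thesis unfolding revealed_count_def using explore_local[OF assms, of E i] by simp
qed

lemma revealed_count_Suc_split:
  assumes wf: "wf_state s"
    and E1: "E1 \<subseteq> (\<lambda>u. {current s, u}) ` (remaining s - {current s})"
    and E2: "E2 \<subseteq> pairs (remaining s - {current s})"
  shows "revealed (E1 \<union> E2) s = revealed E1 s"
    and "revealed_count (E1 \<union> E2) s (Suc i) = revealed_count E2 (explore_step E1 s) i"
proof -
  have "{current s, u} \<notin> E2" for u using E2 unfolding pairs_def by auto
  then show rev: "revealed (E1 \<union> E2) s = revealed E1 s" unfolding revealed_def by auto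
  define t where "t = explore_step E1 s"
  have step: "explore_step (E1 \<union> E2) s = t" unfolding t_def explore_step_def rev ..
  have rem: "remaining t = remaining s - {current s}"
    unfolding t_def by (rule remaining_explore_step)
  have "(E1 \<union> E2) \<inter> pairs (remaining t) = E2"
    using E1 E2 star_Int_pairs[of "current s" "remaining s - {current s}"] unfolding rem by blast
  then have "revealed_count (E1 \<union> E2) t i = revealed_count E2 t i"
    using revealed_count_local[of t "remaining t" "E1 \<union> E2" i] wf_state_explore_step[OF wf]
    unfolding t_def by simp
  then show "revealed_count (E1 \<union> E2) s (Suc i) = revealed_count E2 t i"
    unfolding revealed_count_def explore_Suc_right step by simp
qed

lemma card_revealed_le:
  assumes "finite E" shows "card (revealed E s) \<le> card E"
proof -
  have "(\<lambda>u. {current s, u}) ` revealed E s \<subseteq> E" unfolding revealed_def by auto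
  moreover have "inj_on (\<lambda>u. {current s, u}) (revealed E s)"
    by (auto intro!: inj_onI simp: doubleton_eq_iff)
  ultimately show ?thesis using assms by (metis card_image card_mono)
qed

text \<open>The first step reads only the edges at the current vertex and the rest of the exploration
  only the edges among the other remaining vertices, so the expectation factorises.\<close>

lemma bexpect_prod_revealed_count_Suc:
  fixes g :: "nat \<Rightarrow> real"
  assumes wf: "wf_state s" and ne: "remaining s \<noteq> {}"
  defines "W \<equiv> remaining s - {current s}"
  defines "D \<equiv> (\<lambda>u. {current s, u}) ` W"
  shows "bexpect p (pairs (remaining s)) (\<lambda>E. \<Prod>i<Suc k. g i ^ revealed_count E s i)
    = (\<Sum>E1\<in>Pow D. bweight p D E1 * g 0 ^ card (revealed E1 s) *
         bexpect p (pairs W) (\<lambda>E. \<Prod>i<k. g (Suc i) ^ revealed_count E (explore_step E1 s) i))"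
proof -
  have fW: "finite W" unfolding W_def using finite_remaining[OF wf] by simp
  have "remaining s = insert (current s) W" "current s \<notin> W"
    unfolding W_def using current_in_remaining[OF wf ne] by auto
  then have pairs: "pairs (remaining s) = D \<union> pairs W" "D \<inter> pairs W = {}"
    unfolding D_def by (simp_all add: pairs_insert star_Int_pairs)
  have split: "(\<Prod>i<Suc k. g i ^ revealed_count (E1 \<union> E2) s i)
      = g 0 ^ card (revealed E1 s) * (\<Prod>i<k. g (Suc i) ^ revealed_count E2 (explore_step E1 s) i)"
    if "E1 \<subseteq> D" "E2 \<subseteq> pairs W" for E1 E2
    using revealed_count_Suc_split[OF wf, of E1 E2] that
    unfolding prod.lessThan_Suc_shift D_def W_def by (simp add: revealed_count_def)
  have "bexpect p (pairs (remaining s)) (\<lambda>E. \<Prod>i<Suc k. g i ^ revealed_count E s i)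
      = (\<Sum>E1\<in>Pow D. bweight p D E1 *
           bexpect p (pairs W) (\<lambda>E2. \<Prod>i<Suc k. g i ^ revealed_count (E1 \<union> E2) s i))"
    unfolding pairs(1) using bexpect_Un[OF _ finite_pairs[OF fW] pairs(2)] fW by (simp add: D_def)
  also have "\<dots> = (\<Sum>E1\<in>Pow D. bweight p D E1 * g 0 ^ card (revealed E1 s) *
      bexpect p (pairs W) (\<lambda>E. \<Prod>i<k. g (Suc i) ^ revealed_count E (explore_step E1 s) i))"
    by (intro sum.cong refl, subst bexpect_cong[OF split])
      (auto simp: bexpect_cmult mult.assoc simp del: prod.lessThan_Suc)
  finally show ?thesis .
qed

text \<open>Given the past, each increment is dominated by a Binomial(n, p) variable, since only the
  edges from the current vertex to the unexplored vertices are revealed; this is the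
  exponential-moment form of that domination.\<close>

lemma bexpect_prod_power_revealed_count_le:
  assumes "wf_state s" "card (remaining s) \<le> n" "\<forall>i. 1 \<le> g i" "0 \<le> p" "p \<le> 1"
  shows "bexpect p (pairs (remaining s)) (\<lambda>E. \<Prod>i<k. g i ^ revealed_count E s i)
           \<le> (\<Prod>i<k. (1 - p + p * g i) ^ n)"
  using assms
proof (induction k arbitrary: s g)
  case 0
  then show ?case by (simp add: bexpect_const finite_pairs finite_remaining)
next
  case (Suc k)
  note wf = Suc.prems(1) and g1 = Suc.prems(3) and p = Suc.prems(4,5)
  have factor_ge_1: "1 \<le> 1 - p + p * g i" for i
    using mult_left_mono[of 1 "g i" p] g1 p by simp
  have bound_ge_1: "1 \<le> (\<Prod>i\<in>A. (1 - p + p * g (f i)) ^ n)" for A :: "nat set" and f :: "nat \<Rightarrow> nat"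
    by (intro prod_ge_1 one_le_power factor_ge_1)
  show ?case
  proof (cases "remaining s = {}")
    case True
    then have "revealed_count E s i = 0" for E i
      using remaining_explore_subset[of E s i]
      by (simp add: revealed_count_def revealed_def candidates_def remaining_def)
    then show ?thesis using True bound_ge_1[of id "{..<Suc k}"]
      by (simp add: bexpect_const finite_pairs del: prod.lessThan_Suc)
  next
    case False
    define W where "W = remaining s - {current s}"
    define D where "D = (\<lambda>u. {current s, u}) ` W"
    define B where "B = (\<Prod>i<k. (1 - p + p * g (Suc i)) ^ n)"
    have fW: "finite W" unfolding W_def using finite_remaining[OF wf] by simp
    have cardW: "card W \<le> n"
      using Suc.prems(2) finite_remaining[OF wf] unfolding W_def by (meson card_Diff1_le le_trans)
    have fD: "finite D" unfolding D_def using fW by simp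
    have cardD: "card D \<le> n" unfolding D_def using cardW card_image_le[OF fW] le_trans by blast
    have IH: "bexpect p (pairs W) (\<lambda>E. \<Prod>i<k. g (Suc i) ^ revealed_count E (explore_step E1 s) i) \<le> B"
      for E1
      using Suc.IH[of "explore_step E1 s" "\<lambda>i. g (Suc i)"] wf_state_explore_step[OF wf]
        remaining_explore_step[of E1 s] cardW g1 p
      unfolding W_def B_def by simp
    have "bexpect p (pairs (remaining s)) (\<lambda>E. \<Prod>i<Suc k. g i ^ revealed_count E s i)
        \<le> (\<Sum>E1\<in>Pow D. bweight p D E1 * g 0 ^ card E1 * B)"
      unfolding bexpect_prod_revealed_count_Suc[OF wf False] W_def[symmetric] D_def[symmetric]
    proof (rule sum_mono, rule mult_mono)
      fix E1 assume "E1 \<in> Pow D"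
      then have "card (revealed E1 s) \<le> card E1"
        using fD by (intro card_revealed_le) (auto intro: finite_subset)
      then show "bweight p D E1 * g 0 ^ card (revealed E1 s) \<le> bweight p D E1 * g 0 ^ card E1"
        using g1 bweight_nonneg[OF p] by (intro mult_left_mono power_increasing) auto
      show "0 \<le> bweight p D E1 * g 0 ^ card E1"
        using g1 bweight_nonneg[OF p] by (metis order_trans zero_le_one zero_le_mult_iff zero_le_power)
      show "0 \<le> bexpect p (pairs W) (\<lambda>E. \<Prod>i<k. g (Suc i) ^ revealed_count E (explore_step E1 s) i)"
        using g1 p by (intro bexpect_nonneg prod_nonneg zero_le_power) (auto intro: order_trans[OF zero_le_one])
    qed (rule IH)
    also have "\<dots> = (1 - p + p * g 0) ^ card D * B"
      by (simp add: sum_bweight_power_card[OF fD] sum_distrib_right[symmetric])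
    also have "\<dots> \<le> (\<Prod>i<Suc k. (1 - p + p * g i) ^ n)"
      unfolding prod.lessThan_Suc_shift B_def
      using power_increasing[OF cardD factor_ge_1[of 0]] bound_ge_1[of Suc "{..<k}"]
      by (intro mult_right_mono) auto
    finally show ?thesis .
  qed
qed

section \<open>Sets of steps and their boundaries\<close>

definition boundary :: "nat \<Rightarrow> nat set \<Rightarrow> nat set" where
  "boundary m S = {i. i \<le> m \<and> (i \<in> S) \<noteq> (0 < i \<and> i - 1 \<in> S)}"

lemma boundary_subset: "boundary m S \<subseteq> {..m}"
  unfolding boundary_def by auto

lemma inj_on_boundary: "inj_on (boundary m) (Pow {..<m})"
proof (rule inj_onI)
  fix S S' assume S: "S \<in> Pow {..<m}" and S': "S' \<in> Pow {..<m}"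
    and eq: "boundary m S = boundary m S'"
  have "i \<in> S \<longleftrightarrow> i \<in> S'" for i
  proof (induction i)
    case 0
    have "0 \<in> boundary m S \<longleftrightarrow> 0 \<in> boundary m S'" using eq by simp
    then show ?case unfolding boundary_def by simp
  next
    case (Suc i)
    show ?case
    proof (cases "Suc i \<le> m")
      case True
      have "Suc i \<in> boundary m S \<longleftrightarrow> Suc i \<in> boundary m S'" using eq by simp
      then show ?thesis using True Suc.IH unfolding boundary_def by auto
    next
      case False
      then show ?thesis using S S' by auto
    qed
  qed
  then show "S = S'" by auto
qed

lemma boundary_UN_intervals_subset:
  "boundary m (\<Union>t\<in>R. {t..<f t}) \<subseteq> R \<union> f ` R"
proof
  define S where "S = (\<Union>t\<in>R. {t..<f t})"
  fix i assume "i \<in> boundary m (\<Union>t\<in>R. {t..<f t})"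
  then have xor: "(i \<in> S) \<noteq> (0 < i \<and> i - 1 \<in> S)" unfolding boundary_def S_def by simp
  show "i \<in> R \<union> f ` R"
  proof (cases "i \<in> S")
    case True
    then obtain t where t: "t \<in> R" "t \<le> i" "i < f t" unfolding S_def by auto
    have "\<not> t < i"
    proof
      assume "t < i"
      then have "0 < i \<and> i - 1 \<in> {t..<f t}" using t by auto
      then have "0 < i \<and> i - 1 \<in> S" using t(1) unfolding S_def by blast
      then show False using xor True by simp
    qed
    then show ?thesis using t by simp
  next
    case False
    then obtain t where t: "t \<in> R" "t \<le> i - 1" "i - 1 < f t" "0 < i"
      using xor unfolding S_def by auto
    then have "i = f t" using False unfolding S_def by force
    then show ?thesis using t by simp
  qed
qed

lemma sum_Pow_power_card:
  assumes "finite D" shows "(\<Sum>B\<in>Pow D. (d::real) ^ card B) = (1 + d) ^ card D"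
proof -
  have "(1 + d) ^ card D = (\<Prod>x\<in>D. d + 1)" by (simp add: add.commute)
  also have "\<dots> = (\<Sum>B\<in>Pow D. (\<Prod>x\<in>B. d) * (\<Prod>x\<in>D - B. 1))" by (rule prod_add[OF assms])
  finally show ?thesis by simp
qed

lemma sum_power_card_boundary_le:
  fixes d :: real
  assumes "0 \<le> d" "\<SS> \<subseteq> Pow {..<m}"
  shows "(\<Sum>S\<in>\<SS>. d ^ card (boundary m S)) \<le> (1 + d) ^ Suc m"
proof -
  have "(\<Sum>S\<in>\<SS>. d ^ card (boundary m S)) = (\<Sum>B\<in>boundary m ` \<SS>. d ^ card B)"
    using inj_on_subset[OF inj_on_boundary assms(2)] by (simp add: sum.reindex)
  also have "\<dots> \<le> (\<Sum>B\<in>Pow {..m}. d ^ card B)"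
    using boundary_subset assms(1) by (intro sum_mono2) auto
  also have "\<dots> = (1 + d) ^ Suc m" by (simp add: sum_Pow_power_card)
  finally show ?thesis .
qed

section \<open>Excursions of the exploration of a graph on {1..n}\<close>

definition explore_start :: "nat \<Rightarrow> state" where
  "explore_start n = ({}, {1..n})"

locale graph_exploration =
  fixes n :: nat and E :: "nat set set"
  assumes edges_subset: "E \<subseteq> all_edges n"
begin

definition active :: "nat \<Rightarrow> nat set" where
  "active i = fst (explore E (explore_start n) i)"

definition unexplored :: "nat \<Rightarrow> nat set" where
  "unexplored i = snd (explore E (explore_start n) i)"

definition unvisited :: "nat \<Rightarrow> nat set" where
  "unvisited i = remaining (explore E (explore_start n) i)"

definition vertex :: "nat \<Rightarrow> nat" where
  "vertex i = current (explore E (explore_start n) i)"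

abbreviation X :: "nat \<Rightarrow> nat" where
  "X \<equiv> revealed_count E (explore_start n)"

lemma wf_state_explore_start: "wf_state (explore E (explore_start n) i)"
  by (intro wf_state_explore) (simp add: wf_state_def explore_start_def)

lemma unvisited_0: "unvisited 0 = {1..n}"
  by (simp add: unvisited_def remaining_def explore_start_def)

lemma card_unvisited: "card (unvisited i) = n - i"
  using card_remaining_explore[of "explore_start n" E i]
  by (simp add: unvisited_def remaining_def explore_start_def wf_state_def)

lemma finite_unvisited: "finite (unvisited i)"
  unfolding unvisited_def by (rule finite_remaining[OF wf_state_explore_start])

lemma unvisited_Suc: "unvisited (Suc i) = unvisited i - {vertex i}"
  by (simp add: unvisited_def vertex_def remaining_explore_step)

lemma unvisited_eq_Un: "unvisited i = active i \<union> unexplored i"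
  unfolding active_def unexplored_def unvisited_def remaining_def ..

lemma unvisited_eq_empty: "n \<le> i \<Longrightarrow> unvisited i = {}"
  using card_unvisited[of i] finite_unvisited[of i] by simp

lemma active_eq_empty: "n \<le> i \<Longrightarrow> active i = {}"
  using unvisited_eq_empty unvisited_eq_Un by blast

lemma active_0: "active 0 = {}"
  by (simp add: active_def explore_start_def)

lemma vertex_in_unvisited:
  assumes "i < n" shows "vertex i \<in> unvisited i"
proof -
  have "unvisited i \<noteq> {}" using card_unvisited[of i] assms by auto
  then show ?thesis
    using current_in_remaining[OF wf_state_explore_start] unfolding vertex_def unvisited_def by simp
qed

lemma unvisited_antimono: "i \<le> j \<Longrightarrow> unvisited j \<subseteq> unvisited i"
  by (induction j rule: dec_induct) (auto simp: unvisited_Suc)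

lemma unvisited_subset: "unvisited i \<subseteq> {1..n}"
  using unvisited_antimono[of 0 i] unvisited_0 by simp

lemma vertex_notin_unvisited: "i < j \<Longrightarrow> vertex i \<notin> unvisited j"
  using unvisited_antimono[of "Suc i" j] unvisited_Suc[of i] by auto

lemma ex_vertex_eq: "x \<in> {1..n} \<Longrightarrow> \<exists>i<n. x = vertex i"
proof -
  have "x \<notin> unvisited j \<Longrightarrow> \<exists>i<j. x = vertex i" if "x \<in> {1..n}" for j
    using that by (induction j) (auto simp: unvisited_0 unvisited_Suc less_Suc_eq)
  then show "x \<in> {1..n} \<Longrightarrow> ?thesis" using unvisited_eq_empty[of n] by blast
qed

lemma unexplored_Suc_subset: "unexplored (Suc i) \<subseteq> unexplored i"
  by (auto simp: unexplored_def explore_step_def candidates_def)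

text \<open>The neighbours of a vertex are activated when it is explored.\<close>

lemma edge_from_explored:
  "y \<in> {1..n} - unvisited i \<Longrightarrow> {y, u} \<in> E \<Longrightarrow> u \<notin> unexplored i"
proof (induction i arbitrary: y)
  case (Suc i)
  show ?case
  proof (cases "y \<in> unvisited i")
    case False
    then show ?thesis using Suc unexplored_Suc_subset[of i] by auto
  next
    case True
    then have "y = vertex i" using Suc.prems(1) unvisited_Suc[of i] by auto
    then show ?thesis using Suc.prems(2)
      by (auto simp: unexplored_def vertex_def explore_step_def revealed_def)
  qed
qed (simp add: unvisited_0)

lemma card_active_Suc:
  "card (active (Suc i)) + (if active i = {} then 0 else 1) = card (active i) + X i"
proof -
  define t where "t = explore E (explore_start n) i"
  have wf: "wf_state t" unfolding t_def by (rule wf_state_explore_start)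
  have fin: "finite (fst t)" "finite (revealed E t)"
    using wf revealed_subset[of E t] finite_subset
    by (auto simp: wf_state_def candidates_def)
  have disj: "fst t \<inter> revealed E t = {}"
    using wf revealed_subset[of E t] by (auto simp: wf_state_def candidates_def)
  have active_Suc: "active (Suc i) = (fst t \<union> revealed E t) - {current t}"
    by (simp add: active_def t_def explore_step_def)
  have "X i = card (revealed E t)" by (simp add: revealed_count_def t_def)
  moreover have "active i = fst t" by (simp add: active_def t_def)
  moreover have "current t \<notin> revealed E t" by (auto simp: revealed_def candidates_def)
  moreover have "fst t \<noteq> {} \<Longrightarrow> current t \<in> fst t \<and> 0 < card (fst t)"
    using fin by (simp add: current_def card_gt_0_iff)
  ultimately show ?thesis
    using fin disj by (auto simp: active_Suc card_Un_disjoint)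
qed

text \<open>The steps at which no vertex is active cut the exploration into excursions, one per
  cluster.\<close>

definition excursion_start :: "nat \<Rightarrow> nat" where
  "excursion_start j = (GREATEST i. i \<le> j \<and> active i = {})"

definition excursion_end :: "nat \<Rightarrow> nat" where
  "excursion_end j = (LEAST i. j < i \<and> active i = {})"

lemma excursion_start_spec:
  "excursion_start j \<le> j" "active (excursion_start j) = {}"
  "excursion_start j < i \<Longrightarrow> i \<le> j \<Longrightarrow> active i \<noteq> {}"
proof -
  have ex: "0 \<le> j \<and> active 0 = {}" by (simp add: active_0)
  show "excursion_start j \<le> j" "active (excursion_start j) = {}"
    using GreatestI_nat[of "\<lambda>i. i \<le> j \<and> active i = {}" 0 j, OF ex] unfolding excursion_start_def by auto
  show "active i \<noteq> {}" if "excursion_start j < i" "i \<le> j"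
    using Greatest_le_nat[of "\<lambda>i. i \<le> j \<and> active i = {}" i j] that unfolding excursion_start_def by auto
qed

lemma excursion_end_spec:
  "j < excursion_end j" "active (excursion_end j) = {}"
  "j < i \<Longrightarrow> i < excursion_end j \<Longrightarrow> active i \<noteq> {}"
proof -
  have ex: "j < Suc (max j n) \<and> active (Suc (max j n)) = {}" by (simp add: active_eq_empty)
  show "j < excursion_end j" "active (excursion_end j) = {}"
    using LeastI[of "\<lambda>i. j < i \<and> active i = {}", OF ex] unfolding excursion_end_def by auto
  show "active i \<noteq> {}" if "j < i" "i < excursion_end j"
    using not_less_Least[of i "\<lambda>i. j < i \<and> active i = {}"] that unfolding excursion_end_def by auto
qed

lemma excursion_end_le: "j < n \<Longrightarrow> excursion_end j \<le> n"
  unfolding excursion_end_def by (rule Least_le) (simp add: active_eq_empty)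

lemma excursion_of_start:
  assumes "active t = {}" "t \<le> j" "j < excursion_end t"
  shows "excursion_start j = t" "excursion_end j = excursion_end t"
proof -
  show "excursion_start j = t"
    unfolding excursion_start_def
  proof (rule Greatest_equality)
    fix i assume "i \<le> j \<and> active i = {}"
    then show "i \<le> t" using excursion_end_spec(3)[of t i] assms by (cases "t < i") auto
  qed (use assms in auto)
  show "excursion_end j = excursion_end t"
  proof (unfold excursion_end_def[of j], rule Least_equality)
    fix i assume "j < i \<and> active i = {}"
    then show "excursion_end t \<le> i" using excursion_end_spec(3)[of t i] assms by force
  qed (use assms excursion_end_spec[of t] in auto)
qed

lemma excursion_end_excursion_start: "excursion_end (excursion_start j) = excursion_end j"
proof -
  define t where "t = excursion_start j"
  have "j < excursion_end t"
  proof (rule ccontr)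
    assume "\<not> j < excursion_end t"
    then show False
      using excursion_start_spec(3)[of j "excursion_end t"] excursion_end_spec(1,2)[of t] unfolding t_def by simp
  qed
  then show ?thesis
    using excursion_of_start(2)[of t j] excursion_start_spec(1,2)[of j] unfolding t_def by simp
qed

definition excursion_set :: "nat \<Rightarrow> nat set" where
  "excursion_set j = unvisited (excursion_start j) - unvisited (excursion_end j)"

lemma excursion_set_closed:
  assumes j: "j < n" and y: "y \<in> excursion_set j" and e: "{y, u} \<in> E"
  shows "u \<in> excursion_set j"
proof -
  have y_vertex: "y \<in> {1..n}" using y unvisited_subset unfolding excursion_set_def by blast
  have u_vertex: "u \<in> {1..n}"
    using e edges_subset unfolding all_edges_def by (auto simp: doubleton_eq_iff)
  have "u \<notin> unexplored (excursion_end j)"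
    using edge_from_explored[of y "excursion_end j" u] y_vertex y e unfolding excursion_set_def by simp
  then have "u \<notin> unvisited (excursion_end j)" using unvisited_eq_Un excursion_end_spec(2) by auto
  moreover have "u \<in> unvisited (excursion_start j)"
  proof (rule ccontr)
    assume "u \<notin> unvisited (excursion_start j)"
    then have "y \<notin> unexplored (excursion_start j)"
      using edge_from_explored[of u _ y] u_vertex e by (auto simp: insert_commute)
    then show False
      using y unvisited_eq_Un excursion_start_spec(2) unfolding excursion_set_def by auto
  qed
  ultimately show ?thesis unfolding excursion_set_def by blast
qed

lemma cluster_vertex_subset:
  assumes "j < n" shows "cluster n E (vertex j) \<subseteq> excursion_set j"
proof
  have start: "vertex j \<in> excursion_set j"
    using vertex_in_unvisited[OF assms] unvisited_antimono[OF excursion_start_spec(1)[of j]]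
      vertex_notin_unvisited[OF excursion_end_spec(1)[of j]]
    unfolding excursion_set_def by auto
  fix y assume "y \<in> cluster n E (vertex j)"
  then have "(vertex j, y) \<in> {(a, b). {a, b} \<in> E}\<^sup>*" unfolding cluster_def by auto
  then show "y \<in> excursion_set j"
    by (induction rule: rtrancl_induct) (auto intro: start excursion_set_closed[OF assms])
qed

lemma card_excursion_set:
  assumes "j < n" shows "card (excursion_set j) = excursion_end j - excursion_start j"
proof -
  have "unvisited (excursion_end j) \<subseteq> unvisited (excursion_start j)"
    using excursion_start_spec(1)[of j] excursion_end_spec(1)[of j] by (intro unvisited_antimono) simp
  then have "card (excursion_set j) = card (unvisited (excursion_start j)) - card (unvisited (excursion_end j))"
    unfolding excursion_set_def by (simp add: card_Diff_subset finite_unvisited)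
  then show ?thesis
    using excursion_end_le[OF assms] by (simp add: card_unvisited)
qed

definition long_starts :: "nat \<Rightarrow> nat set" where
  "long_starts M = {t. t < n \<and> active t = {} \<and> M < excursion_end t - t}"

definition long_steps :: "nat \<Rightarrow> nat set" where
  "long_steps M = {j. j < n \<and> M < excursion_end j - excursion_start j}"

lemma card_S_big_le_card_long_steps: "card (S_big n M E) \<le> card (long_steps M)"
proof -
  have "S_big n M E \<subseteq> vertex ` long_steps M"
  proof
    fix x assume "x \<in> S_big n M E"
    then have x: "x \<in> {1..n}" "M < card (cluster n E x)" unfolding S_big_def by auto
    then obtain j where j: "j < n" "x = vertex j" using ex_vertex_eq by blast
    have "card (cluster n E x) \<le> card (excursion_set j)"
      using cluster_vertex_subset[OF j(1)] finite_unvisited j(2)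
      unfolding excursion_set_def by (intro card_mono) auto
    then show "x \<in> vertex ` long_steps M"
      using x(2) j card_excursion_set[OF j(1)] unfolding long_steps_def by auto
  qed
  moreover have "finite (long_steps M)" unfolding long_steps_def by simp
  ultimately show ?thesis by (meson card_image_le card_mono finite_imageI le_trans)
qed

lemma long_steps_eq_UN: "long_steps M = (\<Union>t\<in>long_starts M. {t..<excursion_end t})"
proof safe
  fix j assume "j \<in> long_steps M"
  then show "j \<in> (\<Union>t\<in>long_starts M. {t..<excursion_end t})"
    using excursion_start_spec(1,2)[of j] excursion_end_excursion_start[of j] excursion_end_spec(1)[of j]
    unfolding long_steps_def long_starts_def
    by (intro UN_I[of "excursion_start j"]) auto
next
  fix t j assume "t \<in> long_starts M" "j \<in> {t..<excursion_end t}"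
  then show "j \<in> long_steps M"
    using excursion_of_start[of t j] excursion_end_le[of t]
    unfolding long_steps_def long_starts_def by auto
qed

lemma excursions_disjoint:
  assumes "t \<in> long_starts M" "t' \<in> long_starts M" "t \<noteq> t'"
  shows "{t..<excursion_end t} \<inter> {t'..<excursion_end t'} = {}"
proof -
  have disj: "{a..<excursion_end a} \<inter> {b..<excursion_end b} = {}" if "a < b" "active b = {}" for a b
    using excursion_end_spec(3)[of a b] that by auto
  show ?thesis
  proof (cases "t < t'")
    case True
    then show ?thesis using disj[of t t'] assms(2) by (simp add: long_starts_def)
  next
    case False
    then have "t' < t" using assms(3) by simp
    then show ?thesis using disj[of t' t] assms(1) by (subst Int_commute) (simp add: long_starts_def)
  qed
qed

lemma finite_long_starts: "finite (long_starts M)"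
  unfolding long_starts_def by simp

lemma card_long_steps: "card (long_steps M) = (\<Sum>t\<in>long_starts M. excursion_end t - t)"
proof -
  have "card (\<Union>t\<in>long_starts M. {t..<excursion_end t})
      = (\<Sum>t\<in>long_starts M. card {t..<excursion_end t})"
    by (rule card_UN_disjoint) (use finite_long_starts excursions_disjoint in blast)+
  then show ?thesis by (simp add: long_steps_eq_UN)
qed

lemma card_long_starts_le: "(M + 1) * card (long_starts M) \<le> card (long_steps M)"
proof -
  have "(\<Sum>t\<in>long_starts M. M + 1) \<le> (\<Sum>t\<in>long_starts M. excursion_end t - t)"
    by (intro sum_mono) (auto simp: long_starts_def)
  then show ?thesis by (simp add: card_long_steps mult.commute)
qed

text \<open>Along an excursion each step but the first explores an active vertex, so the increments
  telescope against the number of active vertices.\<close>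

lemma sum_X_excursion:
  assumes "active t = {}"
  shows "(\<Sum>j\<in>{t..<excursion_end t}. X j) = excursion_end t - t - 1"
proof -
  have "k \<le> excursion_end t \<longrightarrow> (\<Sum>j\<in>{t..<k}. X j) = card (active k) + (k - t - 1)"
    if "Suc t \<le> k" for k
    using that
  proof (induction k rule: dec_induct)
    case base
    then show ?case using card_active_Suc[of t] assms by simp
  next
    case (step k)
    show ?case
    proof
      assume le: "Suc k \<le> excursion_end t"
      then have "active k \<noteq> {}" using excursion_end_spec(3)[of t k] step(1) by simp
      then have "card (active (Suc k)) + 1 = card (active k) + X k" using card_active_Suc[of k] by simp
      moreover have "(\<Sum>j\<in>{t..<Suc k}. X j) = (\<Sum>j\<in>{t..<k}. X j) + X k"
        using step(1) by simp
      ultimately show "(\<Sum>j\<in>{t..<Suc k}. X j) = card (active (Suc k)) + (Suc k - t - 1)"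
        using step(1,3) le by simp
    qed
  qed
  from this[of "excursion_end t"] show ?thesis
    using excursion_end_spec(1,2)[of t] by (simp add: Suc_le_eq)
qed

lemma sum_X_long_steps:
  "(\<Sum>j\<in>long_steps M. X j) + card (long_starts M) = card (long_steps M)"
proof -
  have "(\<Sum>j\<in>long_steps M. X j) = (\<Sum>t\<in>long_starts M. \<Sum>j\<in>{t..<excursion_end t}. X j)"
    unfolding long_steps_eq_UN
    by (rule sum.UNION_disjoint) (use finite_long_starts excursions_disjoint in blast)+
  also have "\<dots> = (\<Sum>t\<in>long_starts M. excursion_end t - t - 1)"
    by (intro sum.cong) (auto simp: long_starts_def sum_X_excursion)
  moreover have "(\<Sum>t\<in>long_starts M. excursion_end t - t - 1) + card (long_starts M)
      = (\<Sum>t\<in>long_starts M. excursion_end t - t)"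
    unfolding card_eq_sum sum.distrib[symmetric]
    by (intro sum.cong refl) (simp add: Suc_diff_Suc excursion_end_spec(1))
  ultimately show ?thesis by (simp add: card_long_steps)
qed

lemma card_boundary_long_steps:
  "card (boundary n (long_steps M)) \<le> 2 * card (long_starts M)"
proof -
  have "card (boundary n (long_steps M)) \<le> card (long_starts M \<union> excursion_end ` long_starts M)"
    unfolding long_steps_eq_UN
    by (intro card_mono boundary_UN_intervals_subset) (simp add: finite_long_starts)
  also have "\<dots> \<le> card (long_starts M) + card (excursion_end ` long_starts M)"
    by (rule card_Un_le)
  also have "\<dots> \<le> 2 * card (long_starts M)"
    using card_image_le[OF finite_long_starts] by simp
  finally show ?thesis .
qed

lemma card_boundary_long_steps_le:
  "(M + 1) * card (boundary n (long_steps M)) \<le> 2 * card (long_steps M)"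
proof -
  have "(M + 1) * card (boundary n (long_steps M)) \<le> (M + 1) * (2 * card (long_starts M))"
    by (rule mult_le_mono2[OF card_boundary_long_steps])
  with card_long_starts_le[of M] show ?thesis by linarith
qed

lemma sum_X_long_steps_ge:
  "real M * card (long_steps M) \<le> real (M + 1) * (\<Sum>j\<in>long_steps M. real (X j))"
proof -
  have sum_eq: "(\<Sum>j\<in>long_steps M. real (X j)) = real (card (long_steps M)) - real (card (long_starts M))"
    using arg_cong[OF sum_X_long_steps, of real, where M1=M] by simp
  have "real M * card (long_steps M) = real (M + 1) * card (long_steps M) - card (long_steps M)"
    by (simp add: algebra_simps)
  also have "\<dots> \<le> real (M + 1) * card (long_steps M) - real (M + 1) * card (long_starts M)"
    using card_long_starts_le[of M] by (metis diff_left_mono of_nat_le_iff of_nat_mult)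
  also have "\<dots> = real (M + 1) * (\<Sum>j\<in>long_steps M. real (X j))"
    unfolding sum_eq by (simp add: right_diff_distrib)
  finally show ?thesis .
qed

end

section \<open>Large deviations\<close>

lemma bexpect_exp_sum_revealed_count_le:
  fixes \<theta> p :: real
  assumes S: "S \<subseteq> {..<n}" and "0 \<le> \<theta>" and p: "0 \<le> p" "p \<le> 1"
  shows "bexpect p (all_edges n)
           (\<lambda>E. exp (\<theta> * (\<Sum>j\<in>S. real (revealed_count E (explore_start n) j))))
         \<le> (1 - p + p * exp \<theta>) ^ (n * card S)"
proof -
  define g where "g j = (if j \<in> S then exp \<theta> else 1)" for j
  have g_ge_1: "\<forall>j. 1 \<le> g j" unfolding g_def using \<open>0 \<le> \<theta>\<close> by simp
  have finS: "finite S" using S finite_subset by blast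
  have S_eq: "{..<n} \<inter> S = S" using S by auto
  have "(\<Prod>j<n. g j ^ revealed_count E (explore_start n) j)
      = exp (\<theta> * (\<Sum>j\<in>S. real (revealed_count E (explore_start n) j)))" for E
  proof -
    have "(\<Prod>j<n. g j ^ revealed_count E (explore_start n) j)
        = (\<Prod>j<n. if j \<in> S then exp \<theta> ^ revealed_count E (explore_start n) j else 1)"
      by (intro prod.cong) (auto simp: g_def)
    also have "\<dots> = (\<Prod>j\<in>S. exp (real (revealed_count E (explore_start n) j) * \<theta>))"
      using prod.inter_restrict[where A="{..<n}" and B=S
          and g="\<lambda>j. exp \<theta> ^ revealed_count E (explore_start n) j"]
      by (simp add: S_eq exp_of_nat_mult)
    also have "\<dots> = exp (\<theta> * (\<Sum>j\<in>S. real (revealed_count E (explore_start n) j)))"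
      using finS by (simp add: exp_sum sum_distrib_left mult.commute)
    finally show ?thesis .
  qed
  then have "bexpect p (all_edges n)
           (\<lambda>E. exp (\<theta> * (\<Sum>j\<in>S. real (revealed_count E (explore_start n) j))))
      = bexpect p (pairs (remaining (explore_start n)))
           (\<lambda>E. \<Prod>j<n. g j ^ revealed_count E (explore_start n) j)"
    by (simp add: all_edges_eq_pairs remaining_def explore_start_def)
  also have "\<dots> \<le> (\<Prod>j<n. (1 - p + p * g j) ^ n)"
    using g_ge_1 p
    by (intro bexpect_prod_power_revealed_count_le) (simp_all add: wf_state_def remaining_def explore_start_def)
  also have "\<dots> = (\<Prod>j<n. if j \<in> S then (1 - p + p * exp \<theta>) ^ n else 1)"
    by (intro prod.cong) (auto simp: g_def)
  also have "\<dots> = (1 - p + p * exp \<theta>) ^ (n * card S)"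
    using prod.inter_restrict[where A="{..<n}" and B=S and g="\<lambda>j. (1 - p + p * exp \<theta>) ^ n"]
    by (simp add: S_eq power_mult)
  finally show ?thesis .
qed

lemma chernoff_sum_revealed_count:
  fixes lam a :: real
  assumes lam: "0 < lam" "lam < 1" and "0 < n" and S: "S \<subseteq> {..<n}"
  shows "bexpect (lam / n) (all_edges n)
           (\<lambda>E. if a \<le> (\<Sum>j\<in>S. real (revealed_count E (explore_start n) j)) then 1 else 0)
         \<le> exp (ln lam * a + (1 - lam) * card S)"
proof -
  define p where "p = lam / n"
  define \<theta> where "\<theta> = - ln lam"
  have p: "0 \<le> p" "p \<le> 1" unfolding p_def using lam \<open>0 < n\<close> by (auto simp: field_simps)
  have "0 \<le> \<theta>" unfolding \<theta>_def using lam by simp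
  have markov: "(if a \<le> f then 1 else 0) \<le> exp (- \<theta> * a) * exp (\<theta> * f)" for f
    using \<open>0 \<le> \<theta>\<close> by (simp add: exp_add[symmetric] algebra_simps mult_left_mono)
  have base: "1 - p + p * exp \<theta> = 1 + (1 - lam) / n"
    unfolding p_def \<theta>_def using lam \<open>0 < n\<close> by (simp add: exp_minus field_simps)
  have power_le: "(1 - p + p * exp \<theta>) ^ (n * card S) \<le> exp (1 - lam) ^ card S"
    unfolding power_mult base using lam \<open>0 < n\<close>
    by (intro power_mono exp_ge_one_plus_x_over_n_power_n) auto
  have "bexpect p (all_edges n)
           (\<lambda>E. if a \<le> (\<Sum>j\<in>S. real (revealed_count E (explore_start n) j)) then 1 else 0)
      \<le> bexpect p (all_edges n)
           (\<lambda>E. exp (- \<theta> * a) * exp (\<theta> * (\<Sum>j\<in>S. real (revealed_count E (explore_start n) j))))"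
    by (rule bexpect_mono[OF p markov])
  also have "\<dots> \<le> exp (- \<theta> * a) * (1 - p + p * exp \<theta>) ^ (n * card S)"
    unfolding bexpect_cmult
    by (intro mult_left_mono bexpect_exp_sum_revealed_count_le[OF S \<open>0 \<le> \<theta>\<close> p]) simp
  also have "\<dots> \<le> exp (- \<theta> * a) * exp (1 - lam) ^ card S"
    using power_le by (intro mult_left_mono) simp_all
  also have "\<dots> = exp (ln lam * a + (1 - lam) * card S)"
    unfolding \<theta>_def by (simp add: exp_add exp_of_nat_mult[symmetric] mult.commute)
  finally show ?thesis unfolding p_def .
qed

lemma ln_less_minus_one: "0 < (x::real) \<Longrightarrow> x \<noteq> 1 \<Longrightarrow> ln x < x - 1"
  using ln_le_minus_one[of x] ln_eq_minus_one[of x] by fastforce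

text \<open>The Chernoff rate c per step has to beat both the loss from asking only M/(M+1) (rather
  than 1) increments per step and the factor d^(-b) spent on counting sets of steps by their b
  boundary points; the condition on M ensures both.\<close>

lemma chernoff_exponent_le:
  fixes lam d r s :: real and b M :: nat
  defines "c \<equiv> lam - 1 - ln lam"
  assumes lam: "0 < lam" "lam < 1" and d: "0 < d" "d \<le> 1"
    and M: "- ln lam - 2 * ln d \<le> c / 2 * real (M + 1)"
    and b: "real (M + 1) * b \<le> 2 * s" and "r \<le> s"
  shows "exp (ln lam * (real M * s / real (M + 1)) + (1 - lam) * s) \<le> d ^ b * exp (- c * r / 2)"
proof -
  define k where "k = real (M + 1)"
  have k: "0 < k" unfolding k_def by simp
  have "0 < c" unfolding c_def using ln_less_minus_one[of lam] lam by simp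
  have "0 \<le> k * real b" using k by simp
  then have "0 \<le> s" using b unfolding k_def by linarith
  have eq: "real M * s / k = s - s / k" using k by (simp add: k_def field_simps)
  have "ln lam * (real M * s / k) + (1 - lam) * s = - c * s - ln lam * s / k"
    unfolding eq c_def by (simp add: algebra_simps)
  also have "\<dots> \<le> - c * s + (c * s / 2 + 2 * ln d * s / k)"
  proof -
    have "(- ln lam - 2 * ln d) * (s / k) \<le> c / 2 * k * (s / k)"
      using M \<open>0 \<le> s\<close> k unfolding k_def by (intro mult_right_mono) auto
    moreover have "(- ln lam - 2 * ln d) * (s / k) = - (ln lam * s / k) - 2 * ln d * s / k"
      by (simp add: algebra_simps)
    moreover have "c / 2 * k * (s / k) = c * s / 2" using k by simp
    ultimately show ?thesis by linarith
  qed
  also have "\<dots> \<le> - c * r / 2 + b * ln d"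
  proof -
    have "b \<le> 2 * s / k" using b k unfolding k_def by (simp add: pos_le_divide_eq mult.commute)
    then have "2 * s / k * ln d \<le> b * ln d" using d by (intro mult_right_mono_neg) auto
    then have "2 * ln d * s / k \<le> b * ln d" by (simp add: mult.commute mult.left_commute)
    moreover have "c * r \<le> c * s" using \<open>r \<le> s\<close> \<open>0 < c\<close> by simp
    ultimately show ?thesis by linarith
  qed
  finally have "exp (ln lam * (real M * s / real (M + 1)) + (1 - lam) * s) \<le> exp (b * ln d + - c * r / 2)"
    unfolding k_def by simp
  also have "\<dots> = d ^ b * exp (- c * r / 2)"
    unfolding exp_add using d by (simp add: exp_of_nat_mult)
  finally show ?thesis .
qed

lemma prob_S_big_le_sum:
  fixes lam \<rho> :: real and n M :: nat
  assumes lam: "0 < lam" "lam < 1" and "0 < n"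
  defines "\<SS> \<equiv> {S. S \<subseteq> {..<n} \<and> \<rho> * n \<le> card S \<and> (M + 1) * card (boundary n S) \<le> 2 * card S}"
  shows "measure_pmf.prob (gnp n (lam / n)) {E. \<rho> * n \<le> card (S_big n M E)}
    \<le> (\<Sum>S\<in>\<SS>. exp (ln lam * (real M * card S / real (M + 1)) + (1 - lam) * card S))"
proof -
  define p where "p = lam / n"
  have p: "0 < p" "p < 1" and p': "0 \<le> p" "p \<le> 1"
    unfolding p_def using lam \<open>0 < n\<close> by (auto simp: field_simps)
  define ind where "ind S E = (if real M * card S / real (M + 1)
      \<le> (\<Sum>j\<in>S. real (revealed_count E (explore_start n) j)) then 1 else (0::real))" for S E
  have fin: "finite \<SS>" unfolding \<SS>_def by (rule finite_subset[of _ "Pow {..<n}"]) auto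
  have cover: "(if E \<in> {E. \<rho> * n \<le> card (S_big n M E)} then 1 else 0) \<le> (\<Sum>S\<in>\<SS>. ind S E)"
    if "E \<subseteq> all_edges n" for E
  proof (cases "\<rho> * n \<le> card (S_big n M E)")
    case True
    interpret graph_exploration n E by unfold_locales (rule that)
    have "\<rho> * n \<le> card (long_steps M)"
      using True card_S_big_le_card_long_steps[of M] by (meson of_nat_le_iff order_trans)
    then have "long_steps M \<in> \<SS>"
      using card_boundary_long_steps_le[of M] unfolding \<SS>_def long_steps_def by auto
    moreover have "ind (long_steps M) E = 1"
      using sum_X_long_steps_ge[of M] unfolding ind_def by (simp add: field_simps)
    ultimately show ?thesis
      using member_le_sum[of "long_steps M" \<SS> "\<lambda>S. ind S E"] fin True by (simp add: ind_def)
  next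
    case False
    then show ?thesis by (simp add: ind_def sum_nonneg)
  qed
  have "measure_pmf.prob (gnp n p) {E. \<rho> * n \<le> card (S_big n M E)}
      \<le> bexpect p (all_edges n) (\<lambda>E. \<Sum>S\<in>\<SS>. ind S E)"
    unfolding prob_gnp_eq_bexpect[OF p] by (rule bexpect_mono[OF p' cover])
  also have "\<dots> = (\<Sum>S\<in>\<SS>. bexpect p (all_edges n) (ind S))"
    by (rule bexpect_sum)
  also have "\<dots> \<le> (\<Sum>S\<in>\<SS>. exp (ln lam * (real M * card S / real (M + 1)) + (1 - lam) * card S))"
    unfolding p_def ind_def
    by (intro sum_mono chernoff_sum_revealed_count[OF lam \<open>0 < n\<close>]) (simp add: \<SS>_def)
  finally show ?thesis unfolding p_def .
qed

lemma prob_S_big_le: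
  fixes lam \<rho> d :: real and n M :: nat
  defines "c \<equiv> lam - 1 - ln lam"
  assumes lam: "0 < lam" "lam < 1" and "0 < n" and d: "0 < d" "d \<le> 1"
    and M: "- ln lam - 2 * ln d \<le> c / 2 * real (M + 1)"
  shows "measure_pmf.prob (gnp n (lam / n)) {E. \<rho> * n \<le> card (S_big n M E)}
    \<le> (1 + d) ^ Suc n * exp (- c * (\<rho> * n) / 2)"
proof -
  define \<SS> where "\<SS> = {S. S \<subseteq> {..<n} \<and> \<rho> * n \<le> card S \<and> (M + 1) * card (boundary n S) \<le> 2 * card S}"
  have "measure_pmf.prob (gnp n (lam / n)) {E. \<rho> * n \<le> card (S_big n M E)}
    \<le> (\<Sum>S\<in>\<SS>. exp (ln lam * (real M * card S / real (M + 1)) + (1 - lam) * card S))"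
    unfolding \<SS>_def by (rule prob_S_big_le_sum[OF lam \<open>0 < n\<close>])
  also have "\<dots> \<le> (\<Sum>S\<in>\<SS>. d ^ card (boundary n S) * exp (- c * (\<rho> * n) / 2))"
  proof (intro sum_mono)
    fix S assume "S \<in> \<SS>"
    then have b: "(M + 1) * card (boundary n S) \<le> 2 * card S" and r: "\<rho> * n \<le> card S"
      unfolding \<SS>_def by auto
    have "real ((M + 1) * card (boundary n S)) \<le> real (2 * card S)" using b by (simp only: of_nat_le_iff)
    then have "real (M + 1) * card (boundary n S) \<le> 2 * real (card S)"
      by (simp only: of_nat_mult of_nat_numeral)
    from chernoff_exponent_le[OF lam d M[unfolded c_def] this r]
    show "exp (ln lam * (real M * card S / real (M + 1)) + (1 - lam) * card S)
        \<le> d ^ card (boundary n S) * exp (- c * (\<rho> * n) / 2)"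
      unfolding c_def .
  qed
  also have "\<dots> = (\<Sum>S\<in>\<SS>. d ^ card (boundary n S)) * exp (- c * (\<rho> * n) / 2)"
    by (simp add: sum_distrib_right)
  also have "\<dots> \<le> (1 + d) ^ Suc n * exp (- c * (\<rho> * n) / 2)"
    using d by (intro mult_right_mono sum_power_card_boundary_le) (auto simp: \<SS>_def)
  finally show ?thesis .
qed

lemma one_plus_power_mult_exp_le:
  fixes c d \<rho> :: real
  assumes "0 \<le> d" "d \<le> 1" "d \<le> c * \<rho> / 4"
  shows "(1 + d) ^ Suc n * exp (- c * (\<rho> * n) / 2) \<le> exp 1 * exp (- (c / 4) * \<rho> * n)"
proof -
  have "(1 + d) ^ Suc n \<le> exp d ^ Suc n"
    using assms by (intro power_mono) (auto simp: add.commute)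
  also have "\<dots> = exp (d * n + d)" by (simp add: exp_add exp_of_nat_mult[symmetric] algebra_simps)
  also have "\<dots> \<le> exp (c * \<rho> / 4 * n + 1)"
    using assms by (intro exp_mono add_mono mult_right_mono) auto
  finally have "(1 + d) ^ Suc n * exp (- c * (\<rho> * n) / 2) \<le> exp (c * \<rho> / 4 * n + 1) * exp (- c * (\<rho> * n) / 2)"
    by (intro mult_right_mono) auto
  also have "\<dots> = exp 1 * exp (- (c / 4) * \<rho> * n)"
    by (simp add: exp_add[symmetric] algebra_simps)
  finally show ?thesis .
qed

lemma prob_S_big_eventually_le:
  fixes lam \<rho> :: real
  defines "c \<equiv> lam - 1 - ln lam"
  assumes lam: "0 < lam" "lam < 1" and "0 < \<rho>"
  shows "\<exists>M0::nat. \<forall>M\<ge>M0. \<forall>n::nat. measure_pmf.prob (gnp n (lam / real n))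
    {E. real (card (S_big n M E)) \<ge> \<rho> * real n} \<le> exp 1 * exp (- (c / 4) * \<rho> * real n)"
proof (intro exI allI impI)
  have "0 < c" unfolding c_def using ln_less_minus_one[of lam] lam by simp
  define d where "d = min 1 (c * \<rho> / 4)"
  have d: "0 < d" "d \<le> 1" "d \<le> c * \<rho> / 4" unfolding d_def using \<open>0 < c\<close> \<open>0 < \<rho>\<close> by auto
  fix M n :: nat assume "nat \<lceil>2 * (- ln lam - 2 * ln d) / c\<rceil> \<le> M"
  then have "2 * (- ln lam - 2 * ln d) / c \<le> real (M + 1)" by linarith
  then have M: "- ln lam - 2 * ln d \<le> c / 2 * real (M + 1)"
    using \<open>0 < c\<close> by (simp add: field_simps)
  show "measure_pmf.prob (gnp n (lam / real n)) {E. real (card (S_big n M E)) \<ge> \<rho> * real n}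
      \<le> exp 1 * exp (- (c / 4) * \<rho> * real n)"
  proof (cases "n = 0")
    case True
    have "measure_pmf.prob (gnp n (lam / real n)) {E. real (card (S_big n M E)) \<ge> \<rho> * real n} \<le> 1"
      by (rule measure_pmf.prob_le_1)
    also have "\<dots> \<le> exp 1 * exp (- (c / 4) * \<rho> * real n)" using True by simp
    finally show ?thesis .
  next
    case False
    then have "measure_pmf.prob (gnp n (lam / real n)) {E. real (card (S_big n M E)) \<ge> \<rho> * real n}
        \<le> (1 + d) ^ Suc n * exp (- c * (\<rho> * n) / 2)"
      using prob_S_big_le[OF lam _ d(1,2) M[unfolded c_def], of n \<rho>, folded c_def] by simp
    also have "\<dots> \<le> exp 1 * exp (- (c / 4) * \<rho> * real n)"
      using d by (intro one_plus_power_mult_exp_le) auto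
    finally show ?thesis .
  qed
qed

theorem mainTheorem3:
  fixes lam :: real
  assumes "0 < lam" and "lam < 1"
  shows "\<exists>c>0. \<forall>\<rho>>0. \<exists>M0::nat. \<forall>M\<ge>M0. \<exists>C::real. \<forall>n::nat.
           measure_pmf.prob (gnp n (lam / real n))
             {E. real (card (S_big n M E)) \<ge> \<rho> * real n}
           \<le> C * exp (- c * \<rho> * real n)"
proof (intro exI[of _ "(lam - 1 - ln lam) / 4"] conjI allI impI)
  show "0 < (lam - 1 - ln lam) / 4" using ln_less_minus_one[of lam] assms by simp
  fix \<rho> :: real assume "0 < \<rho>"
  then obtain M0 :: nat where "\<forall>M\<ge>M0. \<forall>n::nat. measure_pmf.prob (gnp n (lam / real n))
      {E. real (card (S_big n M E)) \<ge> \<rho> * real n}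
      \<le> exp 1 * exp (- ((lam - 1 - ln lam) / 4) * \<rho> * real n)"
    using prob_S_big_eventually_le[OF assms] by blast
  then show "\<exists>M0::nat. \<forall>M\<ge>M0. \<exists>C::real. \<forall>n::nat. measure_pmf.prob (gnp n (lam / real n))
      {E. real (card (S_big n M E)) \<ge> \<rho> * real n} \<le> C * exp (- ((lam - 1 - ln lam) / 4) * \<rho> * real n)"
    by blast
qed

end
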